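(* For any connected graph $G_n$ on $n$ nodes, the stopping time of the broadcast protocol $\mathcal{B_{RR}}$ with the round-robin communication model is $O(n)$ rounds. In the asynchronous time model this holds with probability at least $1-n(2/e)^{3n}$, and in the synchronous time model with probability $1$.
   Context: Broadcast ($1$-dissemination): a single message initially located at one node must reach all nodes; a node holding the message transmits it to its communication partner when it acts (\texttt{PUSH}, or \texttt{EXCHANGE}). Round-robin gossip: each node chooses its communication partner according to a fixed cyclic list of its neighbors, contacting them in this order in its successive actions. Asynchronous time model: each timeslot one node chosen independently and uniformly at random acts; $n$ timeslots form a round. Synchronous time model: in each round every node acts; information received in a round can be sent only from the next round. The stopping time is the number of rounds until all nodes hold the message. *)

theory Defs
  imports "HOL-Probability.Probability"
begin

text \<open>Round-robin: each node v has a fixed cyclic list nbrs v of its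
  neighbours (distinct, listing exactly its neighbours); in its k-th action (k = 0,1,...)
  it contacts nbrs v ! (k mod length (nbrs v)).\<close>

definition simple_graph :: "nat set \<Rightarrow> (nat \<times> nat) set \<Rightarrow> bool" where
  "simple_graph V E \<longleftrightarrow> finite V \<and> E \<subseteq> V \<times> V \<and> sym E \<and> irrefl E"

definition connected_graph :: "nat set \<Rightarrow> (nat \<times> nat) set \<Rightarrow> bool" where
  "connected_graph V E \<longleftrightarrow> V \<noteq> {} \<and> (\<forall>u\<in>V. \<forall>v\<in>V. (u, v) \<in> E\<^sup>*)"

definition rr_lists :: "(nat \<times> nat) set \<Rightarrow> (nat \<Rightarrow> nat list) \<Rightarrow> bool" where
  "rr_lists E nbrs \<longleftrightarrow> (\<forall>v. distinct (nbrs v) \<and> set (nbrs v) = {u. (v, u) \<in> E})"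

definition rr_partner :: "(nat \<Rightarrow> nat list) \<Rightarrow> nat \<Rightarrow> nat \<Rightarrow> nat" where
  "rr_partner nbrs v k = nbrs v ! (k mod length (nbrs v))"

text \<open>Synchronous model: informed set after t rounds (round t is every node's t-th action;
  only nodes informed before the round may send in it). If exch, the protocol uses
  EXCHANGE (an acting node also receives the message from its partner), otherwise PUSH.\<close>

fun sync_informed :: "bool \<Rightarrow> (nat \<Rightarrow> nat list) \<Rightarrow> nat \<Rightarrow> nat \<Rightarrow> nat set" where
  "sync_informed exch nbrs s 0 = {s}"
| "sync_informed exch nbrs s (Suc t) =
     (let I = sync_informed exch nbrs s t in
      I \<union> {rr_partner nbrs v t | v. v \<in> I \<and> nbrs v \<noteq> []}
        \<union> {v. exch \<and> nbrs v \<noteq> [] \<and> rr_partner nbrs v t \<in> I})"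

text \<open>Asynchronous model: \<omega> j is the node acting in timeslot j; its action is its
  (number of earlier actions)-th action. Informed set after j timeslots.\<close>

fun async_informed :: "bool \<Rightarrow> (nat \<Rightarrow> nat list) \<Rightarrow> nat \<Rightarrow> (nat \<Rightarrow> nat) \<Rightarrow> nat \<Rightarrow> nat set" where
  "async_informed exch nbrs s \<omega> 0 = {s}"
| "async_informed exch nbrs s \<omega> (Suc j) =
     (let I = async_informed exch nbrs s \<omega> j; u = \<omega> j in
      if nbrs u = [] then I
      else (let p = rr_partner nbrs u (card {i. i < j \<and> \<omega> i = u}) in
            if u \<in> I then insert p I
            else if exch \<and> p \<in> I then insert u I
            else I))"

definition async_schedule :: "nat set \<Rightarrow> nat \<Rightarrow> (nat \<Rightarrow> nat) pmf" where
  "async_schedule V N = Pi_pmf {..<N} 0 (\<lambda>_. pmf_of_set V)"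

end

theory Submission
  imports Defs
begin

text \<open>Fix a shortest walk s = p 0, ..., p k = w. A vertex is adjacent to at most three vertices of
  a shortest walk, so the degrees along it add up to at most 3n. Under round robin a node contacts
  all its neighbours within any deg consecutive actions. Synchronously, p (i + 1) is therefore
  informed at most deg (p i) rounds after p i, and w within 3n rounds. Asynchronously, a token
  moves along the walk and leaves p i once p i has acted deg (p i) times since the token arrived;
  if w is still uninformed after N timeslots, fewer than 3n of them chose the node holding the
  token. Each timeslot does so with probability 1/n independently of the past, so a Chernoff
  bound with N = 6n^2 gives probability at most (2/e)^(3n), and a union bound over w
  finishes the proof.\<close>

section \<open>Hits of a nonanticipating selector\<close>

lemma card_less_Suc_Collect:
  "card {j. j < Suc N \<and> P j} = card {j. j < N \<and> P j} + (if P N then 1 else 0)"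
proof -
  have "{j. j < Suc N \<and> P j} = {j. j < N \<and> P j} \<union> (if P N then {N} else {})"
    by (auto simp: less_Suc_eq)
  then show ?thesis by (auto simp: card_insert_if)
qed

definition nonanticipating :: "((nat \<Rightarrow> 'a) \<Rightarrow> nat \<Rightarrow> 'b) \<Rightarrow> bool" where
  "nonanticipating sel \<longleftrightarrow> (\<forall>\<omega> \<omega>' j. (\<forall>i<j. \<omega> i = \<omega>' i) \<longrightarrow> sel \<omega> j = sel \<omega>' j)"

definition hits :: "((nat \<Rightarrow> 'a) \<Rightarrow> nat \<Rightarrow> 'a) \<Rightarrow> (nat \<Rightarrow> 'a) \<Rightarrow> nat \<Rightarrow> nat" where
  "hits sel \<omega> N = card {j. j < N \<and> \<omega> j = sel \<omega> j}"

lemma hits_Suc: "hits sel \<omega> (Suc N) = hits sel \<omega> N + (if \<omega> N = sel \<omega> N then 1 else 0)"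
  unfolding hits_def by (rule card_less_Suc_Collect)

lemma hits_fun_upd_Suc:
  assumes "nonanticipating sel"
  shows "hits sel (f(N := y)) (Suc N) = hits sel f N + (if y = sel f N then 1 else 0)"
proof -
  have "sel (f(N := y)) j = sel f j" if "j \<le> N" for j
    using assms that unfolding nonanticipating_def by auto
  then have "{j. j < Suc N \<and> (f(N := y)) j = sel (f(N := y)) j}
      = {j. j < Suc N \<and> (if j = N then y else f j) = sel f j}"
    by auto
  then show ?thesis
    unfolding hits_def by (simp add: card_less_Suc_Collect cong: conj_cong)
qed

lemma nn_integral_pmf_of_set_power_indicator:
  fixes x :: real
  assumes "finite V" "v \<in> V" "0 \<le> x"
  shows "(\<integral>\<^sup>+y. ennreal (x ^ (if y = v then 1 else 0)) \<partial>measure_pmf (pmf_of_set V))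
       = ennreal (1 - (1 - x) / card V)"
proof -
  have ne: "V \<noteq> {}" and n: "card V > 0" using assms by (auto simp: card_gt_0_iff)
  have "(\<Sum>y\<in>V. x ^ (if y = v then 1 else 0)) = x + (\<Sum>y\<in>V - {v}. 1)"
    using assms by (simp add: sum.remove[of V v])
  also have "\<dots> = x + (real (card V) - 1)" using assms n by (simp add: of_nat_diff)
  finally have sum: "(\<Sum>y\<in>V. x ^ (if y = v then 1 else 0)) = x + (real (card V) - 1)" .
  have "(\<integral>\<^sup>+y. ennreal (x ^ (if y = v then 1 else 0)) \<partial>measure_pmf (pmf_of_set V))
      = (\<Sum>y\<in>V. ennreal (x ^ (if y = v then 1 else 0))) / of_nat (card V)"
    using assms ne by (simp add: nn_integral_pmf_of_set del: sum_ennreal)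
  also have "\<dots> = ennreal (\<Sum>y\<in>V. x ^ (if y = v then 1 else 0)) / of_nat (card V)"
    using assms by (subst sum_ennreal) auto
  also have "\<dots> = ennreal ((x + (real (card V) - 1)) / card V)"
    using n assms unfolding sum ennreal_of_nat_eq_real_of_nat by (subst divide_ennreal) auto
  also have "(x + (real (card V) - 1)) / card V = 1 - (1 - x) / card V"
    using n by (simp add: field_simps)
  finally show ?thesis .
qed

lemma nn_integral_power_hits:
  fixes x :: real
  assumes V: "finite V" "V \<noteq> {}" and x: "0 \<le> x" "x \<le> 1"
    and sel: "nonanticipating sel" "\<And>\<omega> j. sel \<omega> j \<in> V"
  shows "(\<integral>\<^sup>+\<omega>. ennreal (x ^ hits sel \<omega> N) \<partial>measure_pmf (Pi_pmf {..<N} d (\<lambda>_. pmf_of_set V)))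
         = ennreal ((1 - (1 - x) / card V) ^ N)"
proof (induction N)
  case 0
  then show ?case by (simp add: hits_def)
next
  case (Suc N)
  let ?D = "pmf_of_set V"
  let ?P = "Pi_pmf {..<N} d (\<lambda>_. ?D)"
  let ?q = "1 - (1 - x) / card V"
  have "card V \<ge> 1" using V by (simp add: Suc_le_eq card_gt_0_iff)
  then have "(1 - x) / card V \<le> 1"
    using x by (simp add: divide_le_eq)
  then have q: "0 \<le> ?q" by simp
  have step: "(\<integral>\<^sup>+y. ennreal (x ^ hits sel (f(N := y)) (Suc N)) \<partial>measure_pmf ?D)
      = ennreal (x ^ hits sel f N) * ennreal ?q" for f
  proof -
    have "(\<integral>\<^sup>+y. ennreal (x ^ hits sel (f(N := y)) (Suc N)) \<partial>measure_pmf ?D)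
        = (\<integral>\<^sup>+y. ennreal (x ^ hits sel f N) * ennreal (x ^ (if y = sel f N then 1 else 0)) \<partial>measure_pmf ?D)"
      using x by (intro nn_integral_cong) (simp add: hits_fun_upd_Suc[OF sel(1)] power_add ennreal_mult)
    also have "\<dots> = ennreal (x ^ hits sel f N) * ennreal ?q"
      using V x sel(2) by (simp add: nn_integral_cmult nn_integral_pmf_of_set_power_indicator)
    finally show ?thesis .
  qed
  have "Pi_pmf {..<Suc N} d (\<lambda>_. ?D) = map_pmf (\<lambda>(y, f). f(N := y)) (pair_pmf ?D ?P)"
    by (simp add: lessThan_Suc Pi_pmf_insert)
  then have "(\<integral>\<^sup>+\<omega>. ennreal (x ^ hits sel \<omega> (Suc N)) \<partial>measure_pmf (Pi_pmf {..<Suc N} d (\<lambda>_. ?D)))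
      = (\<integral>\<^sup>+f. \<integral>\<^sup>+y. ennreal (x ^ hits sel (f(N := y)) (Suc N)) \<partial>measure_pmf ?D \<partial>measure_pmf ?P)"
    by (simp add: pair_commute_pmf[of ?D] nn_integral_pair_pmf')
  also have "\<dots> = (\<integral>\<^sup>+\<omega>. ennreal (x ^ hits sel \<omega> N) \<partial>measure_pmf ?P) * ennreal ?q"
    by (simp add: step nn_integral_multc)
  also have "\<dots> = ennreal (?q ^ Suc N)"
    using q by (simp add: Suc.IH ennreal_mult[symmetric] mult.commute)
  finally show ?case .
qed

lemma prob_hits_less:
  assumes V: "finite V" "V \<noteq> {}" and sel: "nonanticipating sel" "\<And>\<omega> j. sel \<omega> j \<in> V"
  shows "measure_pmf.prob (Pi_pmf {..<N} d (\<lambda>_. pmf_of_set V)) {\<omega>. hits sel \<omega> N < m}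
           \<le> 2 ^ m * (1 - 1 / (2 * real (card V))) ^ N"
proof -
  let ?M = "measure_pmf (Pi_pmf {..<N} d (\<lambda>_. pmf_of_set V))"
  let ?A = "{\<omega>. hits sel \<omega> N < m}"
  have n: "card V > 0" using V by (simp add: card_gt_0_iff)
  have markov: "indicator ?A \<omega> \<le> ennreal (2 ^ m) * ennreal ((1/2::real) ^ hits sel \<omega> N)" for \<omega>
  proof (cases "\<omega> \<in> ?A")
    case True
    then have "(2::real) ^ hits sel \<omega> N \<le> 2 ^ m" by (intro power_increasing) auto
    then have "1 \<le> (2::real) ^ m * (1/2) ^ hits sel \<omega> N" by (simp add: field_simps power_divide)
    then show ?thesis using True by (simp add: ennreal_mult[symmetric])
  qed simp
  have "emeasure ?M ?A = (\<integral>\<^sup>+\<omega>. indicator ?A \<omega> \<partial>?M)" by simp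
  also have "\<dots> \<le> (\<integral>\<^sup>+\<omega>. ennreal (2 ^ m) * ennreal ((1/2::real) ^ hits sel \<omega> N) \<partial>?M)"
    by (rule nn_integral_mono) (rule markov)
  also have "\<dots> = ennreal (2 ^ m) * ennreal ((1 - (1 - 1/2) / card V) ^ N)"
    by (simp add: nn_integral_cmult nn_integral_power_hits[OF V _ _ sel])
  also have "\<dots> = ennreal (2 ^ m * (1 - 1 / (2 * real (card V))) ^ N)"
    using n by (subst ennreal_mult) (auto simp: field_simps)
  finally show ?thesis
    using n by (simp add: measure_pmf.emeasure_eq_measure)
qed

lemma two_pow_mult_one_minus_pow_le:
  fixes n :: nat assumes "n > 0"
  shows "(2::real) ^ (3 * n) * (1 - 1 / (2 * real n)) ^ (6 * n * n) \<le> (2 / exp 1) ^ (3 * n)"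
proof -
  have "(1 - 1 / (2 * real n)) ^ (6 * n * n) \<le> exp (- 1 / (2 * real n)) ^ (6 * n * n)"
    using assms exp_ge_add_one_self[of "- 1 / (2 * real n)"]
    by (intro power_mono) (auto simp: field_simps)
  also have "\<dots> = exp (real (6 * n * n) * (- 1 / (2 * real n)))"
    by (rule exp_of_nat_mult[symmetric])
  also have "real (6 * n * n) * (- 1 / (2 * real n)) = real (3 * n) * (- 1)"
    using assms by (simp add: field_simps)
  also have "exp (real (3 * n) * (- 1)) = exp (- 1) ^ (3 * n)"
    by (rule exp_of_nat_mult)
  finally have "(2::real) ^ (3 * n) * (1 - 1 / (2 * real n)) ^ (6 * n * n) \<le> 2 ^ (3 * n) * exp (- 1) ^ (3 * n)"
    by (intro mult_left_mono) auto
  also have "\<dots> = (2 / exp 1) ^ (3 * n)"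
    by (simp add: power_mult_distrib[symmetric] exp_minus field_simps)
  finally show ?thesis .
qed

section \<open>Shortest walks\<close>

definition shortest_walk :: "('a \<times> 'a) set \<Rightarrow> (nat \<Rightarrow> 'a) \<Rightarrow> nat \<Rightarrow> bool" where
  "shortest_walk E p m \<longleftrightarrow>
     (\<forall>i<m. (p i, p (Suc i)) \<in> E) \<and> (\<forall>i\<le>m. \<forall>l<i. (p 0, p i) \<notin> E ^^ l)"

lemma shortest_walk_relpow:
  assumes "shortest_walk E p m" "i \<le> m"
  shows "(p 0, p i) \<in> E ^^ i"
  using assms(2)
proof (induction i)
  case (Suc i)
  then show ?case
    using assms(1) unfolding shortest_walk_def by (auto intro: relpow_Suc_I simp del: relpow.simps)
qed simp

lemma shortest_walk_exists_relpow:
  assumes "(s, w) \<in> E ^^ m" "\<forall>l<m. (s, w) \<notin> E ^^ l"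
  shows "\<exists>p. p 0 = s \<and> p m = w \<and> shortest_walk E p m"
  using assms
proof (induction m arbitrary: w)
  case 0
  then show ?case by (intro exI[of _ "\<lambda>_. s"]) (auto simp: shortest_walk_def)
next
  case (Suc m)
  from Suc.prems(1) obtain y where y: "(s, y) \<in> E ^^ m" "(y, w) \<in> E" by auto
  have "(s, y) \<notin> E ^^ l" if "l < m" for l
    using Suc.prems(2) that y(2) by (meson Suc_mono relpow_Suc_I)
  with Suc.IH[OF y(1)] obtain p where p: "p 0 = s" "p m = y" "shortest_walk E p m" by blast
  have "shortest_walk E (p(Suc m := w)) (Suc m)"
    using p y Suc.prems(2)
    by (auto simp: shortest_walk_def less_Suc_eq le_Suc_eq simp del: relpow.simps)
  moreover have "(p(Suc m := w)) 0 = s" "(p(Suc m := w)) (Suc m) = w" using p by auto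
  ultimately show ?case by blast
qed

lemma shortest_walk_exists:
  assumes "(s, w) \<in> E\<^sup>*"
  shows "\<exists>p m. p 0 = s \<and> p m = w \<and> shortest_walk E p m"
proof -
  obtain n where "(s, w) \<in> E ^^ n" using assms rtrancl_power by blast
  define m where "m = (LEAST m. (s, w) \<in> E ^^ m)"
  have "(s, w) \<in> E ^^ m"
    unfolding m_def by (rule LeastI) fact
  moreover have "\<forall>l<m. (s, w) \<notin> E ^^ l"
    unfolding m_def by (blast dest: not_less_Least)
  ultimately have "\<exists>p. p 0 = s \<and> p m = w \<and> shortest_walk E p m"
    by (rule shortest_walk_exists_relpow)
  then show ?thesis by blast
qed

text \<open>A vertex adjacent to the walk at positions a < i would give a path of length a + 2 to
  p i, so all its neighbours on a shortest walk lie within three consecutive positions.\<close>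

lemma card_adjacent_shortest_walk_le:
  assumes "sym E" "shortest_walk E p k"
  shows "card {i. i < k \<and> (p i, u) \<in> E} \<le> 3"
proof (cases "{i. i < k \<and> (p i, u) \<in> E} = {}")
  case False
  let ?S = "{i. i < k \<and> (p i, u) \<in> E}"
  define a where "a = Min ?S"
  have a: "a \<in> ?S" unfolding a_def using False by (intro Min_in) auto
  have "?S \<subseteq> {a..a + 2}"
  proof
    fix i assume i: "i \<in> ?S"
    have "a \<le> i" unfolding a_def using i by (intro Min_le) auto
    moreover have "(p 0, p a) \<in> E ^^ a" "(p a, u) \<in> E" "(u, p i) \<in> E"
      using a i assms shortest_walk_relpow[OF assms(2), of a] by (auto dest: symD)
    then have "(p 0, p i) \<in> E ^^ Suc (Suc a)" by (meson relpow_Suc_I)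
    then have "\<not> Suc (Suc a) < i"
      using i assms(2) by (auto simp: shortest_walk_def simp del: relpow.simps)
    ultimately show "i \<in> {a..a + 2}" by simp
  qed
  then have "card ?S \<le> card {a..a + 2}" by (intro card_mono) auto
  then show ?thesis by simp
qed (metis card.empty le0)

lemma sum_degree_shortest_walk_le:
  assumes "sym E" "E \<subseteq> V \<times> V" "finite V" "shortest_walk E p k"
  shows "(\<Sum>i<k. card {u. (p i, u) \<in> E}) \<le> 3 * card V"
proof -
  have "(\<Sum>i<k. card {u. (p i, u) \<in> E}) = (\<Sum>i<k. card {u\<in>V. (p i, u) \<in> E})"
    using assms(2) by (intro sum.cong refl arg_cong[where f = card]) auto
  also have "\<dots> = (\<Sum>u\<in>V. card {i. i < k \<and> (p i, u) \<in> E})"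
    using sum.swap_restrict[OF finite_lessThan assms(3), of "\<lambda>_ _. 1::nat"] by simp
  also have "\<dots> \<le> (\<Sum>u\<in>V. 3)"
    using card_adjacent_shortest_walk_le[OF assms(1,4)] by (rule sum_mono)
  finally show ?thesis by simp
qed

section \<open>Round-robin dissemination\<close>

lemma rr_partner_surj_interval:
  assumes "u \<in> set (nbrs v)"
  shows "\<exists>r. c \<le> r \<and> r < c + length (nbrs v) \<and> rr_partner nbrs v r = u"
proof -
  let ?d = "length (nbrs v)"
  obtain i where i: "i < ?d" "nbrs v ! i = u" using assms by (auto simp: in_set_conv_nth)
  have d: "?d > 0" using assms by (rule length_pos_if_in_set)
  \<comment> \<open>the least index from c on that is congruent to i\<close>
  define r where "r = c + (i + ?d - c mod ?d) mod ?d"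
  have "r mod ?d = (c mod ?d + (i + ?d - c mod ?d)) mod ?d"
    unfolding r_def by (metis mod_add_left_eq mod_add_right_eq)
  also have "c mod ?d + (i + ?d - c mod ?d) = i + ?d"
    using i(1) mod_less_divisor[of ?d c] by linarith
  finally have "r mod ?d = i" using i(1) by simp
  moreover have "c \<le> r" "r < c + ?d" unfolding r_def using d by simp_all
  ultimately show ?thesis using i(2) by (auto simp: rr_partner_def)
qed

lemma sync_informed_mono:
  "t \<le> t' \<Longrightarrow> sync_informed exch nbrs s t \<subseteq> sync_informed exch nbrs s t'"
  by (rule lift_Suc_mono_le[of "sync_informed exch nbrs s"]) (auto simp: Let_def)

lemma sync_informed_neighbour:
  assumes "v \<in> sync_informed exch nbrs s t" "u \<in> set (nbrs v)"
  shows "u \<in> sync_informed exch nbrs s (t + length (nbrs v))"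
proof -
  obtain r where r: "t \<le> r" "r < t + length (nbrs v)" "rr_partner nbrs v r = u"
    using rr_partner_surj_interval[of u nbrs v t] assms(2) by blast
  have "v \<in> sync_informed exch nbrs s r" using assms(1) r(1) sync_informed_mono by blast
  then have "u \<in> sync_informed exch nbrs s (Suc r)" using assms(2) r(3) by (auto simp: Let_def)
  moreover have "Suc r \<le> t + length (nbrs v)" using r(2) by simp
  ultimately show ?thesis using sync_informed_mono by blast
qed

definition action_count :: "(nat \<Rightarrow> nat) \<Rightarrow> nat \<Rightarrow> nat \<Rightarrow> nat" where
  "action_count \<omega> v j = card {i. i < j \<and> \<omega> i = v}"

lemma action_count_Suc:
  "action_count \<omega> v (Suc j) = action_count \<omega> v j + (if \<omega> j = v then 1 else 0)"
  unfolding action_count_def by (rule card_less_Suc_Collect)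

lemma action_count_attained:
  assumes "t \<le> j" "action_count \<omega> v t \<le> r" "r < action_count \<omega> v j"
  shows "\<exists>l. t \<le> l \<and> l < j \<and> \<omega> l = v \<and> action_count \<omega> v l = r"
  using assms
proof (induction j)
  case (Suc j)
  show ?case
  proof (cases "r < action_count \<omega> v j")
    case True
    with Suc show ?thesis by (metis le_Suc_eq less_SucI not_le)
  next
    case False
    with Suc.prems have "\<omega> j = v" "r = action_count \<omega> v j" "t \<noteq> Suc j"
      by (auto simp: action_count_Suc split: if_splits)
    with Suc.prems(1) show ?thesis by (intro exI[of _ j]) auto
  qed
qed simp

lemma async_informed_mono:
  "t \<le> t' \<Longrightarrow> async_informed exch nbrs s \<omega> t \<subseteq> async_informed exch nbrs s \<omega> t'"
  by (rule lift_Suc_mono_le[of "async_informed exch nbrs s \<omega>"]) (auto simp: Let_def)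

lemma async_informed_neighbour:
  assumes "v \<in> async_informed exch nbrs s \<omega> t" "t \<le> j" "u \<in> set (nbrs v)"
    and "action_count \<omega> v t + length (nbrs v) \<le> action_count \<omega> v j"
  shows "u \<in> async_informed exch nbrs s \<omega> j"
proof -
  obtain r where r: "action_count \<omega> v t \<le> r" "r < action_count \<omega> v t + length (nbrs v)"
      "rr_partner nbrs v r = u"
    using rr_partner_surj_interval[of u nbrs v "action_count \<omega> v t"] assms(3) by blast
  have "r < action_count \<omega> v j" using r(2) assms(4) by linarith
  then obtain l where l: "t \<le> l" "l < j" "\<omega> l = v" "action_count \<omega> v l = r"
    using action_count_attained[OF assms(2) r(1)] by blast
  have "v \<in> async_informed exch nbrs s \<omega> l"
    using assms(1) l(1) async_informed_mono by blast
  then have "u \<in> async_informed exch nbrs s \<omega> (Suc l)"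
    using assms(3) l r(3) by (auto simp: Let_def action_count_def)
  moreover have "Suc l \<le> j" using l(2) by simp
  ultimately show ?thesis using async_informed_mono by blast
qed

locale rr_walk =
  fixes nbrs :: "nat \<Rightarrow> nat list" and p :: "nat \<Rightarrow> nat" and k :: nat
  assumes walk_step: "i < k \<Longrightarrow> p (Suc i) \<in> set (nbrs (p i))"
begin

lemma length_nbrs_pos: "i < k \<Longrightarrow> 0 < length (nbrs (p i))"
  using walk_step by (rule length_pos_if_in_set)

lemma sync_informed_walk:
  "i \<le> k \<Longrightarrow> p i \<in> sync_informed exch nbrs (p 0) (\<Sum>l<i. length (nbrs (p l)))"
proof (induction i)
  case (Suc i)
  then show ?case
    using sync_informed_neighbour[of "p i" exch nbrs "p 0" _ "p (Suc i)"] walk_step[of i] by simp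
qed simp

text \<open>The token waits at p i and counts the actions of p i since its arrival; after
  length (nbrs (p i)) of them p i has contacted every neighbour, so p (i + 1) is informed and the
  token moves on. Its position depends on the schedule alone, hence choosing its node is
  nonanticipating.\<close>

primrec token :: "(nat \<Rightarrow> nat) \<Rightarrow> nat \<Rightarrow> nat \<times> nat" where
  "token \<omega> 0 = (0, 0)"
| "token \<omega> (Suc j) = (case token \<omega> j of (i, c) \<Rightarrow>
     if i < k \<and> \<omega> j = p i then
       if Suc c = length (nbrs (p i)) then (Suc i, 0) else (i, Suc c)
     else (i, c))"

definition token_node :: "(nat \<Rightarrow> nat) \<Rightarrow> nat \<Rightarrow> nat" where
  "token_node \<omega> j = p (fst (token \<omega> j))"

lemma token_prefix: "\<forall>i<j. \<omega> i = \<omega>' i \<Longrightarrow> token \<omega> j = token \<omega>' j"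
  by (induction j) auto

lemma nonanticipating_token_node: "nonanticipating token_node"
  unfolding nonanticipating_def token_node_def by (metis token_prefix)

lemma fst_token_le: "fst (token \<omega> j) \<le> k"
  by (induction j) (auto split: prod.splits)

lemma hits_token_node:
  assumes "token \<omega> j = (i, c)" "i < k"
  shows "c < length (nbrs (p i)) \<and> hits token_node \<omega> j = (\<Sum>l<i. length (nbrs (p l))) + c"
  using assms
proof (induction j arbitrary: i c)
  case 0
  then show ?case using length_nbrs_pos by (auto simp: hits_def)
next
  case (Suc j)
  obtain i' c' where tj: "token \<omega> j = (i', c')" by fastforce
  have hits: "hits token_node \<omega> (Suc j) = hits token_node \<omega> j + (if \<omega> j = p i' then 1 else 0)"
    by (simp add: hits_Suc token_node_def tj)
  consider (move) "i' < k" "\<omega> j = p i'" "Suc c' = length (nbrs (p i'))"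
    | (count) "i' < k" "\<omega> j = p i'" "Suc c' \<noteq> length (nbrs (p i'))"
    | (wait) "\<not> (i' < k \<and> \<omega> j = p i')"
    by blast
  then show ?case
  proof cases
    case move
    with Suc.prems tj have "i = Suc i'" "c = 0" by auto
    moreover have "0 < length (nbrs (p i))" using Suc.prems(2) by (rule length_nbrs_pos)
    ultimately show ?thesis using Suc.IH[OF tj move(1)] move by (simp add: hits)
  next
    case count
    with Suc.prems tj have "i = i'" "c = Suc c'" by auto
    with Suc.IH[OF tj count(1)] count show ?thesis by (simp add: hits)
  next
    case wait
    with Suc.prems tj have "i = i'" "c = c'" by auto
    with Suc.IH[OF tj] Suc.prems(2) wait show ?thesis by (simp add: hits)
  qed
qed

lemma token_informed:
  assumes "token \<omega> j = (i, c)"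
  shows "\<exists>t\<le>j. p i \<in> async_informed exch nbrs (p 0) \<omega> t
           \<and> (i < k \<longrightarrow> action_count \<omega> (p i) t + c = action_count \<omega> (p i) j)"
  using assms
proof (induction j arbitrary: i c)
  case 0
  then show ?case by (auto simp: action_count_def)
next
  case (Suc j)
  obtain i' c' where tj: "token \<omega> j = (i', c')" by fastforce
  from Suc.IH[OF tj] obtain t where t: "t \<le> j" "p i' \<in> async_informed exch nbrs (p 0) \<omega> t"
    "i' < k \<longrightarrow> action_count \<omega> (p i') t + c' = action_count \<omega> (p i') j"
    by blast
  consider (move) "i' < k" "\<omega> j = p i'" "Suc c' = length (nbrs (p i'))"
    | (count) "i' < k" "\<omega> j = p i'" "Suc c' \<noteq> length (nbrs (p i'))"
    | (wait) "\<not> (i' < k \<and> \<omega> j = p i')"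
    by blast
  then show ?case
  proof cases
    case move
    with Suc.prems tj have "i = Suc i'" "c = 0" by auto
    moreover have "action_count \<omega> (p i') t + length (nbrs (p i')) \<le> action_count \<omega> (p i') (Suc j)"
      using t(3) move by (simp add: action_count_Suc)
    then have "p (Suc i') \<in> async_informed exch nbrs (p 0) \<omega> (Suc j)"
      by (rule async_informed_neighbour[OF t(2) le_SucI[OF t(1)] walk_step[OF move(1)]])
    ultimately show ?thesis by (intro exI[of _ "Suc j"]) simp
  next
    case count
    with Suc.prems tj have "i = i'" "c = Suc c'" by auto
    with t count show ?thesis by (intro exI[of _ t]) (auto simp: action_count_Suc)
  next
    case wait
    with Suc.prems tj have "i = i'" "c = c'" by auto
    with t wait show ?thesis by (intro exI[of _ t]) (auto simp: action_count_Suc)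
  qed
qed

lemma hits_token_node_less:
  assumes "p k \<notin> async_informed exch nbrs (p 0) \<omega> N"
  shows "hits token_node \<omega> N < (\<Sum>i<k. length (nbrs (p i)))"
proof -
  obtain i c where tN: "token \<omega> N = (i, c)" by fastforce
  obtain t where "t \<le> N" "p i \<in> async_informed exch nbrs (p 0) \<omega> t"
    using token_informed[OF tN] by blast
  then have "p i \<in> async_informed exch nbrs (p 0) \<omega> N" using async_informed_mono by blast
  with assms fst_token_le[of \<omega> N] tN have i: "i < k" by (cases "i = k") auto
  then have "hits token_node \<omega> N < (\<Sum>l<i. length (nbrs (p l))) + length (nbrs (p i))"
    using hits_token_node[OF tN] by simp
  also have "\<dots> = (\<Sum>l<Suc i. length (nbrs (p l)))" by simp
  also have "\<dots> \<le> (\<Sum>l<k. length (nbrs (p l)))"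
    using i by (intro sum_mono2) auto
  finally show ?thesis .
qed

end

section \<open>Stopping time\<close>

lemma rr_walk_exists:
  assumes "simple_graph V E" "connected_graph V E" "rr_lists E nbrs" "s \<in> V" "w \<in> V"
  shows "\<exists>p k. p 0 = s \<and> p k = w \<and> rr_walk nbrs p k \<and> (\<forall>i\<le>k. p i \<in> V)
           \<and> (\<Sum>i<k. length (nbrs (p i))) \<le> 3 * card V"
proof -
  have fin: "finite V" and EV: "E \<subseteq> V \<times> V" and sym: "sym E"
    using assms(1) by (auto simp: simple_graph_def)
  have nbrs: "set (nbrs v) = {u. (v, u) \<in> E}" "length (nbrs v) = card {u. (v, u) \<in> E}" for v
    using assms(3) by (auto simp: rr_lists_def distinct_card[symmetric])
  obtain p k where p: "p 0 = s" "p k = w" "shortest_walk E p k"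
    using assms(2,4,5) shortest_walk_exists by (metis connected_graph_def)
  then have edge: "i < k \<Longrightarrow> (p i, p (Suc i)) \<in> E" for i by (simp add: shortest_walk_def)
  have "rr_walk nbrs p k" by unfold_locales (simp add: nbrs edge)
  moreover have "p i \<in> V" if "i \<le> k" for i
  proof (cases i)
    case (Suc l)
    with that have "(p l, p i) \<in> E" using edge by simp
    with EV show ?thesis by blast
  qed (use p(1) assms(4) in simp)
  moreover have "(\<Sum>i<k. length (nbrs (p i))) \<le> 3 * card V"
    using sum_degree_shortest_walk_le[OF sym EV fin p(3)] by (simp add: nbrs)
  ultimately show ?thesis using p by blast
qed

lemma sync_informed_connected:
  assumes "simple_graph V E" "connected_graph V E" "rr_lists E nbrs" "s \<in> V"
  shows "V \<subseteq> sync_informed exch nbrs s (3 * card V)"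
proof
  fix w assume "w \<in> V"
  then obtain p k where p: "p 0 = s" "p k = w" "rr_walk nbrs p k"
      "(\<Sum>i<k. length (nbrs (p i))) \<le> 3 * card V"
    using rr_walk_exists[OF assms] by blast
  then have "w \<in> sync_informed exch nbrs s (\<Sum>i<k. length (nbrs (p i)))"
    using rr_walk.sync_informed_walk[OF p(3), of k] by simp
  then show "w \<in> sync_informed exch nbrs s (3 * card V)"
    using p(4) sync_informed_mono by blast
qed

lemma prob_async_not_informed_le:
  assumes "simple_graph V E" "connected_graph V E" "rr_lists E nbrs" "s \<in> V" "w \<in> V"
  shows "measure_pmf.prob (async_schedule V N) {\<omega>. w \<notin> async_informed exch nbrs s \<omega> N}
           \<le> 2 ^ (3 * card V) * (1 - 1 / (2 * real (card V))) ^ N"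
proof -
  obtain p k where p: "p 0 = s" "p k = w" "rr_walk nbrs p k" "\<forall>i\<le>k. p i \<in> V"
      "(\<Sum>i<k. length (nbrs (p i))) \<le> 3 * card V"
    using rr_walk_exists[OF assms] by blast
  interpret rr_walk nbrs p k by (fact p(3))
  have V: "finite V" "V \<noteq> {}" using assms(1,4) by (auto simp: simple_graph_def)
  have "token_node \<omega> j \<in> V" for \<omega> j
    unfolding token_node_def using p(4) fst_token_le by blast
  have "{\<omega>. w \<notin> async_informed exch nbrs s \<omega> N} \<subseteq> {\<omega>. hits token_node \<omega> N < 3 * card V}"
    using hits_token_node_less p(1,2,5) by fastforce
  then have "measure_pmf.prob (async_schedule V N) {\<omega>. w \<notin> async_informed exch nbrs s \<omega> N}
      \<le> measure_pmf.prob (async_schedule V N) {\<omega>. hits token_node \<omega> N < 3 * card V}"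
    by (rule measure_pmf.finite_measure_mono) simp
  also have "\<dots> \<le> 2 ^ (3 * card V) * (1 - 1 / (2 * real (card V))) ^ N"
    unfolding async_schedule_def
    by (intro prob_hits_less V nonanticipating_token_node \<open>\<And>\<omega> j. token_node \<omega> j \<in> V\<close>)
  finally show ?thesis .
qed

lemma prob_async_not_all_informed_le:
  assumes "simple_graph V E" "connected_graph V E" "rr_lists E nbrs" "s \<in> V"
  shows "measure_pmf.prob (async_schedule V N) {\<omega>. \<not> V \<subseteq> async_informed exch nbrs s \<omega> N}
           \<le> card V * (2 ^ (3 * card V) * (1 - 1 / (2 * real (card V))) ^ N)"
proof -
  have fin: "finite V" using assms(1) by (simp add: simple_graph_def)
  have "measure_pmf.prob (async_schedule V N) {\<omega>. \<not> V \<subseteq> async_informed exch nbrs s \<omega> N}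
      = measure_pmf.prob (async_schedule V N) (\<Union>w\<in>V. {\<omega>. w \<notin> async_informed exch nbrs s \<omega> N})"
    by (rule arg_cong[where f = "measure_pmf.prob _"]) blast
  also have "\<dots> \<le> (\<Sum>w\<in>V. measure_pmf.prob (async_schedule V N) {\<omega>. w \<notin> async_informed exch nbrs s \<omega> N})"
    using fin by (intro measure_pmf.finite_measure_subadditive_finite) auto
  also have "\<dots> \<le> (\<Sum>w\<in>V. 2 ^ (3 * card V) * (1 - 1 / (2 * real (card V))) ^ N)"
    using prob_async_not_informed_le[OF assms] by (rule sum_mono)
  finally show ?thesis by simp
qed

theorem theorem5:
  "\<exists>C::nat. \<forall>V E nbrs s exch.
     simple_graph V E \<and> connected_graph V E \<and> rr_lists E nbrs \<and> s \<in> V \<longrightarrow>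
       V \<subseteq> sync_informed exch nbrs s (C * card V)
     \<and> measure_pmf.prob (async_schedule V (C * card V * card V))
         {\<omega>. V \<subseteq> async_informed exch nbrs s \<omega> (C * card V * card V)}
       \<ge> 1 - real (card V) * (2 / exp 1) ^ (3 * card V)"
proof (intro exI[of _ 6] allI impI conjI)
  fix V E nbrs s exch
  assume "simple_graph V E \<and> connected_graph V E \<and> rr_lists E nbrs \<and> s \<in> V"
  then have G: "simple_graph V E" "connected_graph V E" "rr_lists E nbrs" "s \<in> V" by auto
  show "V \<subseteq> sync_informed exch nbrs s (6 * card V)"
    by (rule order_trans[OF sync_informed_connected[OF G] sync_informed_mono]) simp
  let ?n = "card V"
  let ?M = "async_schedule V (6 * ?n * ?n)"
  let ?good = "{\<omega>. V \<subseteq> async_informed exch nbrs s \<omega> (6 * ?n * ?n)}"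
  have n: "?n > 0" using G(1,4) by (auto simp: simple_graph_def card_gt_0_iff)
  have "measure_pmf.prob ?M (UNIV - ?good)
      \<le> ?n * (2 ^ (3 * ?n) * (1 - 1 / (2 * real ?n)) ^ (6 * ?n * ?n))"
    using prob_async_not_all_informed_le[OF G] by (simp add: set_diff_eq)
  also have "\<dots> \<le> ?n * (2 / exp 1) ^ (3 * ?n)"
    using two_pow_mult_one_minus_pow_le[OF n] by (intro mult_left_mono) auto
  finally show "measure_pmf.prob ?M ?good \<ge> 1 - ?n * (2 / exp 1) ^ (3 * ?n)"
    using measure_pmf.prob_compl[of ?good ?M] by simp
qed

end
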